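(* Let $n\ge2$ and let $(X,\delta)$ be the diversity on an $n$-point set $X$ with $\delta(A)=|A|-1$ for all nonempty $A\subseteq X$ (and $\delta(\emptyset)=0$). Then every embedding of $(X,\delta)$ into $\ell_1^k$ has distortion at least $(n-1)/k$.
   Context: The $\ell_1^k$ diversity is $(\mathbb{R}^k,\delta_1)$ with $\delta_1(A)=\sum_{i=1}^k\max\{|a_i-b_i|:a,b\in A\}$. A map $\phi:X_1\to X_2$ between diversities $(X_1,\delta_1)$, $(X_2,\delta_2)$ has distortion $c\ge1$ if there are $c_1,c_2>0$ with $c=c_1c_2$ and $\frac1{c_1}\delta_1(A)\le\delta_2(\phi(A))\le c_2\delta_1(A)$ for all finite $A\subseteq X_1$. *)

theory Defs
  imports "HOL-Analysis.Analysis"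
begin

definition l1_div :: "(real^'k) set \<Rightarrow> real" where
  "l1_div A = (if A = {} then 0
     else (\<Sum>i\<in>UNIV. Max {\<bar>a $ i - b $ i\<bar> | a b. a \<in> A \<and> b \<in> A}))"

definition card_div :: "'a set \<Rightarrow> real" where
  "card_div A = (if A = {} then 0 else real (card A) - 1)"

definition has_distortion ::
  "('a set \<Rightarrow> real) \<Rightarrow> 'a set \<Rightarrow> ('b set \<Rightarrow> real) \<Rightarrow> ('a \<Rightarrow> 'b) \<Rightarrow> real \<Rightarrow> bool" where
  "has_distortion d1 X1 d2 \<phi> c \<longleftrightarrow>
     (\<exists>c1 c2. c1 > 0 \<and> c2 > 0 \<and> c = c1 * c2 \<and>
        (\<forall>A. A \<subseteq> X1 \<and> finite A \<longrightarrow>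
             d1 A / c1 \<le> d2 (\<phi> ` A) \<and> d2 (\<phi> ` A) \<le> c2 * d1 A))"

end

theory Submission
  imports Defs
begin

text \<open>All of X has diversity n - 1, so its image has l_1 diversity at least (n - 1)/c1. On the
  other hand every coordinate of the l_1 diversity of the image is the spread of some pair,
  and a pair has diversity at most 1, hence image diversity at most c2; summing over the k
  coordinates gives (n - 1)/c1 \<le> k c2.\<close>

lemma finite_pairwise_image:
  "finite A \<Longrightarrow> finite {f a b | a b. a \<in> A \<and> b \<in> A}"
proof -
  assume "finite A"
  moreover have "{f a b | a b. a \<in> A \<and> b \<in> A} = (\<lambda>(a, b). f a b) ` (A \<times> A)"
    by auto
  ultimately show ?thesis by simp
qed

lemma coord_dist_le_l1_div_pair: "\<bar>a $ i - b $ i\<bar> \<le> l1_div {a :: real^'k, b}"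
proof -
  let ?T = "\<lambda>j. {\<bar>x $ j - y $ j\<bar> | x y. x \<in> {a, b} \<and> y \<in> {a, b}}"
  have max_ge: "\<bar>x $ j - y $ j\<bar> \<le> Max (?T j)" if "x \<in> {a, b}" "y \<in> {a, b}" for x y j
    using finite_pairwise_image[of "{a, b}"] that by (intro Max_ge) auto
  have "\<bar>a $ i - b $ i\<bar> \<le> Max (?T i)"
    using max_ge by simp
  also have "\<dots> \<le> (\<Sum>j\<in>UNIV. Max (?T j))"
    using max_ge[of a a] by (intro member_le_sum) auto
  finally show ?thesis
    unfolding l1_div_def by simp
qed

lemma l1_div_le_if_pairs_le:
  fixes A :: "(real^'k) set"
  assumes "finite A" and "A \<noteq> {}"
    and pairs: "\<And>a b. a \<in> A \<Longrightarrow> b \<in> A \<Longrightarrow> l1_div {a, b} \<le> M"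
  shows "l1_div A \<le> real CARD('k) * M"
proof -
  let ?S = "\<lambda>i. {\<bar>a $ i - b $ i\<bar> | a b. a \<in> A \<and> b \<in> A}"
  have "Max (?S i) \<le> M" for i
  proof -
    have "Max (?S i) \<in> ?S i"
      using finite_pairwise_image[OF assms(1), of "\<lambda>a b. \<bar>a $ i - b $ i\<bar>"] assms(2)
      by (intro Max_in) auto
    then obtain a b where "a \<in> A" "b \<in> A" "Max (?S i) = \<bar>a $ i - b $ i\<bar>"
      by blast
    then show ?thesis
      using coord_dist_le_l1_div_pair[of a i b] pairs[of a b] by linarith
  qed
  then have "(\<Sum>i\<in>UNIV. Max (?S i)) \<le> (\<Sum>i\<in>(UNIV :: 'k set). M)"
    by (intro sum_mono)
  then show ?thesis
    using assms(2) by (simp add: l1_div_def)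
qed

lemma card_div_pair_le_one: "card_div {x, y} \<le> 1"
  by (cases "x = y") (simp_all add: card_div_def)

theorem proposition15:
  fixes X :: "'a set" and \<phi> :: "'a \<Rightarrow> real^'k" and n :: nat and c :: real
  assumes "finite X" and "card X = n" and "n \<ge> 2"
    and "inj_on \<phi> X"
    and "has_distortion card_div X l1_div \<phi> c"
  shows "c \<ge> (real n - 1) / real CARD('k)"
proof -
  obtain c1 c2 where c: "c1 > 0" "c2 > 0" "c = c1 * c2"
    and bounds: "\<And>A. A \<subseteq> X \<Longrightarrow> finite A \<Longrightarrow>
      card_div A / c1 \<le> l1_div (\<phi> ` A) \<and> l1_div (\<phi> ` A) \<le> c2 * card_div A"
    using assms(5) unfolding has_distortion_def by blast
  have "X \<noteq> {}"
    using assms(2,3) by auto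
  then have "(real n - 1) / c1 \<le> l1_div (\<phi> ` X)"
    using bounds[of X] assms(1,2) by (simp add: card_div_def)
  also have "\<dots> \<le> real CARD('k) * c2"
  proof (rule l1_div_le_if_pairs_le)
    fix a b assume "a \<in> \<phi> ` X" "b \<in> \<phi> ` X"
    then obtain x y where "x \<in> X" "y \<in> X" "{a, b} = \<phi> ` {x, y}"
      by auto
    then have "l1_div {a, b} \<le> c2 * card_div {x, y}"
      using bounds[of "{x, y}"] by simp
    also have "\<dots> \<le> c2"
      using card_div_pair_le_one[of x y] c(2) by (simp add: mult_le_cancel_left1)
    finally show "l1_div {a, b} \<le> c2" .
  qed (use assms(1) \<open>X \<noteq> {}\<close> in simp_all)
  finally have "real n - 1 \<le> real CARD('k) * c"
    using c by (simp add: divide_le_eq mult_ac)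
  then show ?thesis
    by (simp add: divide_le_eq mult.commute)
qed

end
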